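(* Let $X$ be well ordered, $\Omega=\{P\}$, $\lambda\in K$, $\mathfrak{S}(X)$ ordered by order $(1)$, and $S=\{P(x)P(y)-P(P(x)y)-P(xP(y))-\lambda P(xy)\mid x,y\in\mathfrak{S}(X)\}$. Then $Irr(S)=\Phi(X)$, and $\Phi(X)$ is a $K$-basis of $K\langle X;P|S\rangle=K\langle X;P\rangle/Id(S)$.
   Context: $K$ is a commutative ring with unit. $S(Y)$ denotes the free semigroup on $Y$. $\mathfrak{S}(X)$ is the set of $\Omega$-words for $\Omega=\{P\}$ unary: $\mathfrak{S}_0=S(X)$, $\mathfrak{S}_n=S(X\cup\{P(u)\mid u\in\mathfrak{S}_{n-1}\})$, $\mathfrak{S}(X)=\bigcup_n\mathfrak{S}_n$. $K\langle X;P\rangle$ is the free $K$-module on $\mathfrak{S}(X)$ with concatenation product and $P$ extended linearly. $\mathfrak{S}^\star(X)$ is the set of $\Omega$-words on $X\cup\{\star\}$ with exactly one $\star$, $u|_s$ the substitution of $s$ for $\star$. $Id(S)$ is the $K$-span of all $u|_s$, $u\in\mathfrak{S}^\star(X)$, $s\in S$. $\bar f$ is the leading word of $f$ w.r.t. the given order, and $Irr(S)=\{w\in\mathfrak{S}(X)\mid w\ne u|_{\bar s}\text{ for all }u\in\mathfrak{S}^\star(X),s\in S\}$. Order (1): with $X^*$ ordered deg-lex, write $u=u_0P(x_1)u_1\cdots P(x_t)u_t$ uniquely ($u_i\in X^*$, $x_k\in\mathfrak{S}(X)$), $wt(u)=(t,P,x_1,\dots,P,x_t,u_0,\dots,u_t)$,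 and $u>v$ iff $wt(u)>wt(v)$ lexicographically (recursively on depth). Rota–Baxter words: for $Y,Z\subseteq\mathfrak{S}(X)$ let $YP(Z)=\{yP(z)\}$ etc. and $\Lambda^P_X(Y,Z)=\bigcup_{r\ge1}(YP(Z))^r\cup\bigcup_{r\ge0}(YP(Z))^rY\cup\bigcup_{r\ge1}(P(Z)Y)^r\cup\bigcup_{r\ge0}(P(Z)Y)^rP(Z)$. Put $\Phi_0=S(X)$, $\Phi_n=\Lambda^P_X(\Phi_0,\Phi_{n-1})$ for $n>0$, and $\Phi(X)=\bigcup_{n\ge0}\Phi_n$. *)

theory Defs
  imports Complex_Main "HOL-Library.Poly_Mapping"
begin

text \<open>An atom is either a letter of the alphabet or P applied to a word;
  a word is a (nonempty, see wf) list of atoms; concatenation is list append.\<close>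
datatype 'x atom = Let 'x | Pw "'x atom list"

fun wfa :: "'x atom \<Rightarrow> bool" and wfl :: "'x atom list \<Rightarrow> bool" where
  "wfa (Let x) = True"
| "wfa (Pw u) = (u \<noteq> [] \<and> wfl u)"
| "wfl [] = True"
| "wfl (a # u) = (wfa a \<and> wfl u)"

definition wfw :: "'x atom list \<Rightarrow> bool" where
  "wfw u \<longleftrightarrow> u \<noteq> [] \<and> wfl u"

text \<open>The set of Omega-words on X (X = the universe of type 'x).\<close>
definition Words :: "'x atom list set" where
  "Words = {u. wfw u}"

definition Pword :: "'x atom list \<Rightarrow> 'x atom list" where
  "Pword u = [Pw u]"

fun nstar_a :: "'x option atom \<Rightarrow> nat" and nstar_l :: "'x option atom list \<Rightarrow> nat" where
  "nstar_a (Let None) = 1"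
| "nstar_a (Let (Some x)) = 0"
| "nstar_a (Pw u) = nstar_l u"
| "nstar_l [] = 0"
| "nstar_l (a # u) = nstar_a a + nstar_l u"

definition StarWords :: "'x option atom list set" where
  "StarWords = {u. wfw u \<and> nstar_l u = 1}"

fun sub_a :: "'x atom list \<Rightarrow> 'x option atom \<Rightarrow> 'x atom list"
and sub_w :: "'x atom list \<Rightarrow> 'x option atom list \<Rightarrow> 'x atom list" where
  "sub_a s (Let None) = s"
| "sub_a s (Let (Some x)) = [Let x]"
| "sub_a s (Pw u) = [Pw (sub_w s u)]"
| "sub_w s [] = []"
| "sub_w s (a # u) = sub_a s a @ sub_w s u"

text \<open>u|_s for a word s is sub_w s u.\<close>

type_synonym ('x, 'k) opoly = "'x atom list \<Rightarrow>\<^sub>0 'k"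

definition KXP :: "('x, 'k::comm_ring_1) opoly set" where
  "KXP = {p. Poly_Mapping.keys p \<subseteq> Words}"

definition scal :: "'k::comm_ring_1 \<Rightarrow> ('x, 'k) opoly \<Rightarrow> ('x, 'k) opoly" where
  "scal c p = Poly_Mapping.map (\<lambda>a. c * a) p"

definition lin :: "('x atom list \<Rightarrow> 'y atom list) \<Rightarrow> ('x, 'k::comm_ring_1) opoly \<Rightarrow> ('y, 'k) opoly" where
  "lin f p = (\<Sum>w\<in>Poly_Mapping.keys p. Poly_Mapping.single (f w) (Poly_Mapping.lookup p w))"

definition Idl :: "('x, 'k::comm_ring_1) opoly set \<Rightarrow> ('x, 'k) opoly set" where
  "Idl S = module.span scal {lin (\<lambda>w. sub_w w u) s | u s. u \<in> StarWords \<and> s \<in> S}"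

text \<open>Decomposition u = u0 P(x1) u1 ... P(xt) ut: returns ([u0,...,ut],[x1,...,xt]).\<close>
fun dec :: "'x atom list \<Rightarrow> 'x list list \<times> 'x atom list list" where
  "dec [] = ([[]], [])"
| "dec (Let a # w) = (case dec w of (ss, xs) \<Rightarrow> ((a # hd ss) # tl ss, xs))"
| "dec (Pw v # w) = (case dec w of (ss, xs) \<Rightarrow> ([] # ss, v # xs))"

definition segs :: "'x atom list \<Rightarrow> 'x list list" where "segs u = fst (dec u)"
definition args :: "'x atom list \<Rightarrow> 'x atom list list" where "args u = snd (dec u)"

definition deglex_less :: "'x::wellorder list \<Rightarrow> 'x list \<Rightarrow> bool" where
  "deglex_less a b \<longleftrightarrow> length a < length b \<or>
     (length a = length b \<and> (a, b) \<in> lexord {(x, y). x < y})"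

text \<open>u < v iff wt(u) < wt(v) lexicographically, where
  wt(u) = (t, P, x1, ..., P, xt, u0, ..., ut), the xi compared recursively.\<close>
inductive wlt :: "'x::wellorder atom list \<Rightarrow> 'x atom list \<Rightarrow> bool" where
  by_t: "length (args u) < length (args v) \<Longrightarrow> wlt u v"
| by_args: "\<lbrakk>length (args u) = length (args v); i < length (args u);
     take i (args u) = take i (args v); wlt (args u ! i) (args v ! i)\<rbrakk> \<Longrightarrow> wlt u v"
| by_segs: "\<lbrakk>args u = args v; i < length (segs u);
     take i (segs u) = take i (segs v); deglex_less (segs u ! i) (segs v ! i)\<rbrakk> \<Longrightarrow> wlt u v"

definition lead :: "('x::wellorder, 'k::comm_ring_1) opoly \<Rightarrow> 'x atom list" where
  "lead f = (THE w. w \<in> Poly_Mapping.keys f \<and> (\<forall>v\<in>Poly_Mapping.keys f. v \<noteq> w \<longrightarrow> wlt v w))"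

definition Irr :: "('x::wellorder, 'k::comm_ring_1) opoly set \<Rightarrow> 'x atom list set" where
  "Irr S = {w \<in> Words. \<forall>u\<in>StarWords. \<forall>s\<in>S. w \<noteq> sub_w (lead s) u}"

definition RB :: "'k::comm_ring_1 \<Rightarrow> 'x atom list \<Rightarrow> 'x atom list \<Rightarrow> ('x, 'k) opoly" where
  "RB lam x y =
     Poly_Mapping.single (Pword x @ Pword y) 1
     - Poly_Mapping.single (Pword (Pword x @ y)) 1
     - Poly_Mapping.single (Pword (x @ Pword y)) 1
     - Poly_Mapping.single (Pword (x @ y)) lam"

definition RBS :: "'k::comm_ring_1 \<Rightarrow> ('x, 'k) opoly set" where
  "RBS lam = {RB lam x y | x y. x \<in> Words \<and> y \<in> Words}"

definition YPZ :: "'x atom list set \<Rightarrow> 'x atom list set \<Rightarrow> 'x atom list set" where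
  "YPZ Y Z = {y @ Pword z | y z. y \<in> Y \<and> z \<in> Z}"

definition PZY :: "'x atom list set \<Rightarrow> 'x atom list set \<Rightarrow> 'x atom list set" where
  "PZY Y Z = {Pword z @ y | y z. y \<in> Y \<and> z \<in> Z}"

text \<open>A^r in the free semigroup (A^0 = {empty word}, used only as a prefix).\<close>
definition spow :: "'a list set \<Rightarrow> nat \<Rightarrow> 'a list set" where
  "spow A r = {concat ws | ws. length ws = r \<and> set ws \<subseteq> A}"

definition Lam :: "'x atom list set \<Rightarrow> 'x atom list set \<Rightarrow> 'x atom list set" where
  "Lam Y Z =
     (\<Union>r\<in>{1..}. spow (YPZ Y Z) r)
   \<union> (\<Union>r. {a @ y | a y. a \<in> spow (YPZ Y Z) r \<and> y \<in> Y})
   \<union> (\<Union>r\<in>{1..}. spow (PZY Y Z) r)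
   \<union> (\<Union>r. {a @ Pword z | a z. a \<in> spow (PZY Y Z) r \<and> z \<in> Z})"

definition SX :: "'x atom list set" where
  "SX = {map Let xs | xs. xs \<noteq> []}"

primrec PhiN :: "nat \<Rightarrow> 'x atom list set" where
  "PhiN 0 = SX"
| "PhiN (Suc n) = Lam SX (PhiN n)"

definition Phi :: "'x atom list set" where
  "Phi = (\<Union>n. PhiN n)"

end

theory Submission
  imports Defs
begin

(*
  Proof by an explicit normal-form map.  Call a word Rota-Baxter-normal if, at every depth,
  no two P-atoms P(x) P(y) are adjacent.  We define a K-linear map NF on K<X;P> by
  structural recursion: it rewrites every P(x) P(y) into P(P(x) y) + P(x P(y)) + lam P(x y),
  working from the right so that the continuation it is applied to is already normal.
*)

section \<open>Linear algebra on finitely supported coefficient functions\<close>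

lemma lookup_scal [simp]: "Poly_Mapping.lookup (scal c p) k = c * Poly_Mapping.lookup p k"
  by (simp add: scal_def Poly_Mapping.map.rep_eq when_def)

lemma scal_add: "scal c (p + q) = scal c p + scal c q"
  by (rule poly_mapping_eqI) (simp add: lookup_add algebra_simps)

lemma scal_add_left: "scal (c + d) p = scal c p + scal d p"
  by (rule poly_mapping_eqI) (simp add: lookup_add algebra_simps)

lemma scal_minus: "scal c (p - q) = scal c p - scal c q"
  by (rule poly_mapping_eqI) (simp add: lookup_minus algebra_simps)

lemma scal_single [simp]: "scal c (Poly_Mapping.single k d) = Poly_Mapping.single k (c * d)"
  by (rule poly_mapping_eqI) (simp add: lookup_single when_def)

lemma scal_zero [simp]: "scal c 0 = 0"
  by (rule poly_mapping_eqI) simp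

lemma scal_sum: "scal c (sum f A) = (\<Sum>a\<in>A. scal c (f a))"
  by (induction A rule: infinite_finite_induct) (auto simp: scal_add)

lemma keys_scal: "Poly_Mapping.keys (scal c p) \<subseteq> Poly_Mapping.keys p"
  by (auto simp: in_keys_iff)

text \<open>With \<open>scal\<close>, the polynomials form a K-module; Id(S) is a span in this module,
  so we obtain the span closure properties and the induction principle for spans.\<close>
interpretation poly_module: module scal
  by unfold_locales (simp_all add: scal_add scal_add_left algebra_simps poly_mapping_eqI)

lemma poly_expansion:
  "p = (\<Sum>k\<in>Poly_Mapping.keys p. Poly_Mapping.single k (Poly_Mapping.lookup p k))"
proof (rule poly_mapping_eqI)
  fix j
  have "finite I \<Longrightarrow> Poly_Mapping.lookup (\<Sum>k\<in>I. Poly_Mapping.single k (Poly_Mapping.lookup p k)) j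
      = (if j \<in> I then Poly_Mapping.lookup p j else 0)" for I
    by (induction I rule: finite_induct) (auto simp: lookup_single lookup_add when_def)
  then show "Poly_Mapping.lookup p j
      = Poly_Mapping.lookup (\<Sum>k\<in>Poly_Mapping.keys p. Poly_Mapping.single k (Poly_Mapping.lookup p k)) j"
    by (auto simp: in_keys_iff)
qed

lemma poly_induct [case_names zero single add]:
  fixes p :: "'a \<Rightarrow>\<^sub>0 'b::comm_monoid_add"
  assumes "P 0" "\<And>k c. P (Poly_Mapping.single k c)" "\<And>a b. P a \<Longrightarrow> P b \<Longrightarrow> P (a + b)"
  shows "P p"
proof -
  have "finite I \<Longrightarrow> P (\<Sum>k\<in>I. Poly_Mapping.single k (Poly_Mapping.lookup p k))" for I
    by (induction I rule: finite_induct) (auto intro: assms)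
  then show ?thesis by (subst poly_expansion) simp
qed

definition linext :: "('y atom list \<Rightarrow> ('x, 'k::comm_ring_1) opoly) \<Rightarrow> ('y, 'k) opoly \<Rightarrow> ('x, 'k) opoly"
  where "linext F p = (\<Sum>w\<in>Poly_Mapping.keys p. scal (Poly_Mapping.lookup p w) (F w))"

lemma linext_superset:
  assumes "finite A" "Poly_Mapping.keys p \<subseteq> A"
  shows "linext F p = (\<Sum>w\<in>A. scal (Poly_Mapping.lookup p w) (F w))"
  unfolding linext_def
  by (rule sum.mono_neutral_left) (use assms in \<open>auto simp: in_keys_iff\<close>)

lemma linext_add: "linext F (p + q) = linext F p + linext F q"
proof -
  let ?A = "Poly_Mapping.keys p \<union> Poly_Mapping.keys q"
  have "linext F (p + q) = (\<Sum>w\<in>?A. scal (Poly_Mapping.lookup (p + q) w) (F w))"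
    by (rule linext_superset) (auto simp: keys_add)
  also have "\<dots> = (\<Sum>w\<in>?A. scal (Poly_Mapping.lookup p w) (F w))
                 + (\<Sum>w\<in>?A. scal (Poly_Mapping.lookup q w) (F w))"
    by (simp add: lookup_add scal_add_left sum.distrib)
  also have "\<dots> = linext F p + linext F q"
    by (simp add: linext_superset[of ?A p] linext_superset[of ?A q])
  finally show ?thesis .
qed

lemma linext_zero [simp]: "linext F 0 = 0"
  by (simp add: linext_def)

lemma linext_single [simp]: "linext F (Poly_Mapping.single k c) = scal c (F k)"
  by (cases "c = 0") (simp_all add: linext_def)

lemma linext_scal: "linext F (scal c p) = scal c (linext F p)"
proof -
  have "linext F (scal c p)
      = (\<Sum>w\<in>Poly_Mapping.keys p. scal (Poly_Mapping.lookup (scal c p) w) (F w))"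
    by (rule linext_superset) (auto simp: in_keys_iff)
  then show ?thesis by (simp add: linext_def scal_sum)
qed

lemma linext_diff: "linext F (p - q) = linext F p - linext F q"
proof -
  have "- linext F q = linext F (- q)"
    using linext_add[of F q "- q"] by (intro minus_unique) simp
  then show ?thesis using linext_add[of F p "- q"] by simp
qed

lemma linext_fun_add: "linext (\<lambda>w. F w + G w) p = linext F p + linext G p"
  by (induction p rule: poly_induct) (simp_all add: linext_add scal_add)

lemma linext_fun_diff: "linext (\<lambda>w. F w - G w) p = linext F p - linext G p"
  by (induction p rule: poly_induct) (simp_all add: linext_add scal_minus)

lemma linext_fun_scal: "linext (\<lambda>w. scal c (F w)) p = scal c (linext F p)"
  by (induction p rule: poly_induct) (simp_all add: linext_add scal_add mult.commute)

lemma linext_fun_zero [simp]: "linext (\<lambda>w. 0) p = 0"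
  by (induction p rule: poly_induct) (simp_all add: linext_add)

lemma linext_cong: "(\<And>w. w \<in> Poly_Mapping.keys p \<Longrightarrow> F w = G w) \<Longrightarrow> linext F p = linext G p"
  by (simp add: linext_def)

lemma linext_comp: "linext G (linext F p) = linext (\<lambda>w. linext G (F w)) p"
  by (induction p rule: poly_induct) (simp_all add: linext_add linext_scal)

lemma linext_swap: "linext (\<lambda>w. linext (G w) t) s = linext (\<lambda>k. linext (\<lambda>w. G w k) s) t"
  by (induction t rule: poly_induct) (simp_all add: linext_add linext_fun_add linext_fun_scal)

lemma linext_id [simp]: "linext (\<lambda>w. Poly_Mapping.single w 1) p = p"
  by (induction p rule: poly_induct) (simp_all add: linext_add)

lemma keys_linext:
  "Poly_Mapping.keys (linext F p) \<subseteq> (\<Union>w\<in>Poly_Mapping.keys p. Poly_Mapping.keys (F w))"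
  unfolding linext_def using keys_sum keys_scal by fastforce

lemma lin_linext: "lin f p = linext (\<lambda>w. Poly_Mapping.single (f w) 1) p"
  by (simp add: lin_def linext_def)

definition lcat :: "'x atom list \<Rightarrow> ('x, 'k::comm_ring_1) opoly \<Rightarrow> ('x, 'k) opoly"
  where "lcat L p = linext (\<lambda>w. Poly_Mapping.single (L @ w) 1) p"

definition rcat :: "'x atom list \<Rightarrow> ('x, 'k::comm_ring_1) opoly \<Rightarrow> ('x, 'k) opoly"
  where "rcat R p = linext (\<lambda>w. Poly_Mapping.single (w @ R) 1) p"

definition Pop :: "('x, 'k::comm_ring_1) opoly \<Rightarrow> ('x, 'k) opoly"
  where "Pop p = linext (\<lambda>w. Poly_Mapping.single [Pw w] 1) p"

lemmas linext_simps = linext_comp linext_add linext_scal linext_fun_add linext_fun_scal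
  linext_diff linext_fun_diff scal_add scal_minus rcat_def Pop_def lcat_def

lemma rcat_Pop: "rcat m (Pop X) = linext (\<lambda>z. Poly_Mapping.single (Pw z # m) 1) X"
  by (simp add: linext_simps)

lemma keys_rcat_Pop:
  "Poly_Mapping.keys (rcat m (Pop X)) \<subseteq> (\<lambda>z. Pw z # m) ` Poly_Mapping.keys X"
  unfolding rcat_Pop using keys_linext[of "\<lambda>z. Poly_Mapping.single (Pw z # m) 1" X] by auto

section \<open>The ideal Id(S)\<close>

lemma sub_w_append: "sub_w w (u @ v) = sub_w w u @ sub_w w v"
  by (induction u) auto

lemma nstar_l_append: "nstar_l (u @ v) = nstar_l u + nstar_l v"
  by (induction u) auto

lemma wfl_append: "wfl (u @ v) = (wfl u \<and> wfl v)"
  by (induction u) auto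

lemma embed_props:
  fixes a :: "'x atom" and u :: "'x atom list"
  shows "sub_a w (map_atom Some a) = [a] \<and> nstar_a (map_atom Some a) = 0
           \<and> wfa (map_atom Some a) = wfa a"
    and "sub_w w (map (map_atom Some) u) = u \<and> nstar_l (map (map_atom Some) u) = 0
           \<and> wfl (map (map_atom Some) u) = wfl u"
  by (induction a and u rule: wfa_wfl.induct) auto

abbreviation Gen :: "('x, 'k::comm_ring_1) opoly set \<Rightarrow> ('x, 'k) opoly set" where
  "Gen S \<equiv> {lin (\<lambda>w. sub_w w u) s | u s. u \<in> StarWords \<and> s \<in> S}"

lemma Idl_span: "Idl S = poly_module.span (Gen S)"
  by (simp add: Idl_def)

lemma idl_add: "p \<in> Idl S \<Longrightarrow> q \<in> Idl S \<Longrightarrow> p + q \<in> Idl S"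
  unfolding Idl_span by (rule poly_module.span_add)

lemma idl_diff: "p \<in> Idl S \<Longrightarrow> q \<in> Idl S \<Longrightarrow> p - q \<in> Idl S"
  unfolding Idl_span by (rule poly_module.span_diff)

lemma idl_scal: "p \<in> Idl S \<Longrightarrow> scal c p \<in> Idl S"
  unfolding Idl_span by (rule poly_module.span_scale)

lemma idl_zero: "0 \<in> Idl S"
  unfolding Idl_span by (rule poly_module.span_zero)

lemma idl_linext:
  assumes "\<And>w. w \<in> Poly_Mapping.keys p \<Longrightarrow> F w \<in> Idl S"
  shows "linext F p \<in> Idl S"
  using assms unfolding Idl_span linext_def by (intro poly_module.span_sum poly_module.span_scale) auto

lemma idl_closed:
  assumes f: "\<And>u. u \<in> StarWords \<Longrightarrow> \<exists>u'\<in>StarWords. \<forall>w. f (sub_w w u) = sub_w w u'"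
    and p: "p \<in> Idl S"
  shows "linext (\<lambda>w. Poly_Mapping.single (f w) 1) p \<in> Idl S"
proof -
  have "p \<in> poly_module.span (Gen S)" using p by (simp add: Idl_span)
  then show ?thesis unfolding Idl_span
  proof (induction rule: poly_module.span_induct_alt)
    case base
    then show ?case by (simp add: poly_module.span_zero)
  next
    case (step c x y)
    then obtain u s where x: "x = lin (\<lambda>w. sub_w w u) s" "u \<in> StarWords" "s \<in> S" by blast
    obtain u' where u': "u' \<in> StarWords" "\<And>w. f (sub_w w u) = sub_w w u'"
      using f[OF x(2)] by blast
    have "linext (\<lambda>w. Poly_Mapping.single (f w) 1) x = lin (\<lambda>w. sub_w w u') s"
      by (simp add: x lin_linext linext_comp u')
    then have "linext (\<lambda>w. Poly_Mapping.single (f w) 1) x \<in> poly_module.span (Gen S)"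
      using u' x by (intro poly_module.span_base) blast
    then show ?case using step
      by (simp add: linext_add linext_scal poly_module.span_add poly_module.span_scale)
  qed
qed

lemma lcat_idl: "wfl L \<Longrightarrow> p \<in> Idl S \<Longrightarrow> lcat L p \<in> Idl S"
  unfolding lcat_def
proof (rule idl_closed)
  fix u :: "'a option atom list" assume "wfl L" "u \<in> StarWords"
  then show "\<exists>u'\<in>StarWords. \<forall>w. L @ sub_w w u = sub_w w u'"
    by (intro bexI[of _ "map (map_atom Some) L @ u"])
       (auto simp: StarWords_def wfw_def sub_w_append nstar_l_append wfl_append embed_props)
qed

lemma rcat_idl: "wfl R \<Longrightarrow> p \<in> Idl S \<Longrightarrow> rcat R p \<in> Idl S"
  unfolding rcat_def
proof (rule idl_closed)
  fix u :: "'a option atom list" assume "wfl R" "u \<in> StarWords"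
  then show "\<exists>u'\<in>StarWords. \<forall>w. sub_w w u @ R = sub_w w u'"
    by (intro bexI[of _ "u @ map (map_atom Some) R"])
       (auto simp: StarWords_def wfw_def sub_w_append nstar_l_append wfl_append embed_props)
qed

lemma Pop_idl: "p \<in> Idl S \<Longrightarrow> Pop p \<in> Idl S"
  unfolding Pop_def
proof (rule idl_closed)
  fix u :: "'a option atom list" assume "u \<in> StarWords"
  then show "\<exists>u'\<in>StarWords. \<forall>w. [Pw (sub_w w u)] = sub_w w u'"
    by (intro bexI[of _ "[Pw u]"]) (auto simp: StarWords_def wfw_def)
qed

lemma RB_idl:
  assumes "x \<in> Words" "y \<in> Words"
  shows "RB lam x y \<in> Idl (RBS lam)"
proof -
  have "[Let None] \<in> StarWords" by (simp add: StarWords_def wfw_def)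
  moreover have "RB lam x y \<in> RBS lam" using assms unfolding RBS_def by blast
  moreover have "lin (\<lambda>w. sub_w w [Let None]) (RB lam x y) = RB lam x y"
    by (simp add: lin_linext)
  ultimately have "RB lam x y \<in> Gen (RBS lam)" by force
  then show ?thesis unfolding Idl_span by (rule poly_module.span_base)
qed

section \<open>The normal-form map\<close>

text \<open>The normal forms are computed in continuation-passing style: for a word v,
  \<open>F k\<close> stands for the normal form of v\<cdot>k, where the continuation k is normal.
  Then \<open>NFP lam F m\<close> is the normal form of P(v)\<cdot>m: if m does not start with a
  P-atom nothing is to be done, and P(v)P(y)m' is rewritten by the Rota-Baxter relation
  to P(P(v)y + vP(y) + lam vy)m', whose three summands are normalised recursively.\<close>
function NFP :: "'k::comm_ring_1 \<Rightarrow> ('x atom list \<Rightarrow> ('x, 'k) opoly) \<Rightarrow> 'x atom list \<Rightarrow> ('x, 'k) opoly"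
  where
  "NFP lam F [] = rcat [] (Pop (F []))"
| "NFP lam F (Let x # m) = rcat (Let x # m) (Pop (F []))"
| "NFP lam F (Pw y # m) = rcat m (Pop (NFP lam F y + F [Pw y] + scal lam (F y)))"
  by pat_completeness auto
termination by (relation "measure (\<lambda>(_, _, m). size_list size m)") auto

text \<open>NFa a m and NFl u m are the normal forms of a\<cdot>m and u\<cdot>m, computed from the right.\<close>
fun NFa :: "'k::comm_ring_1 \<Rightarrow> 'x atom \<Rightarrow> 'x atom list \<Rightarrow> ('x, 'k) opoly"
and NFl :: "'k::comm_ring_1 \<Rightarrow> 'x atom list \<Rightarrow> 'x atom list \<Rightarrow> ('x, 'k) opoly" where
  "NFa lam (Let x) = (\<lambda>m. Poly_Mapping.single (Let x # m) 1)"
| "NFa lam (Pw v) = NFP lam (NFl lam v)"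
| "NFl lam [] = (\<lambda>m. Poly_Mapping.single m 1)"
| "NFl lam (a # w) = (\<lambda>m. linext (NFa lam a) (NFl lam w m))"

definition NF :: "'k::comm_ring_1 \<Rightarrow> ('x, 'k) opoly \<Rightarrow> ('x, 'k) opoly" where
  "NF lam p = linext (\<lambda>w. NFl lam w []) p"

lemma NFl_append: "NFl lam (u @ v) m = linext (NFl lam u) (NFl lam v m)"
  by (induction u) (simp_all add: linext_comp)

lemma NFP_Rota_Baxter:
  "linext (NFP lam A) (NFP lam B m)
     = NFP lam (\<lambda>k. linext (NFP lam A) (B k)) m + NFP lam (\<lambda>k. linext A (NFP lam B k)) m
       + scal lam (NFP lam (\<lambda>k. linext A (B k)) m)"
proof (induction lam B m rule: NFP.induct)
  case (3 lam F y m)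
  note IH = 3[THEN arg_cong[where f = "linext (\<lambda>w. Poly_Mapping.single (Pw w # m) 1)"]]
  show ?case using IH by (simp add: linext_simps algebra_simps)
qed (simp_all add: linext_simps algebra_simps)

lemma NFP_linear: "linext (\<lambda>w. NFP lam (G w) m) s = NFP lam (\<lambda>k. linext (\<lambda>w. G w k) s) m"
proof (induction m rule: measure_induct_rule[where f = "size_list size"])
  case (less m)
  show ?case
  proof (cases m)
    case (Cons a m')
    show ?thesis
    proof (cases a)
      case (Pw y)
      have "size_list size y < size_list size m" using Cons Pw by simp
      then show ?thesis using Cons Pw less[of y, symmetric] by (simp add: linext_simps)
    qed (simp add: Cons linext_simps)
  qed (simp add: linext_simps)
qed

lemma NFP_zero [simp]: "NFP lam (\<lambda>k. 0) m = 0"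
  using NFP_linear[of lam "\<lambda>w k. 0" m 0] by simp

text \<open>Consequently, NF annihilates each relation, in every right context m: writing
  x\<cdot>P(y) and x\<cdot>y through \<open>NFl_append\<close>, the four terms of the relation are exactly
  the four terms of the Rota-Baxter identity for \<open>NFP\<close>.\<close>
lemma NF_kills_RB: "linext (\<lambda>w. NFl lam w m) (RB lam x y) = 0"
proof -
  have xPy: "NFl lam (x @ [Pw y]) = (\<lambda>k. linext (NFl lam x) (NFP lam (NFl lam y) k))"
    by (rule HOL.ext) (simp add: NFl_append)
  have xy: "NFl lam (x @ y) = (\<lambda>k. linext (NFl lam x) (NFl lam y k))"
    by (rule HOL.ext) (simp add: NFl_append)
  show ?thesis
    using NFP_Rota_Baxter[of lam "NFl lam x" "NFl lam y" m]
    by (simp add: RB_def Pword_def linext_diff xPy xy del: NFl.simps(2))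
       (simp add: algebra_simps xPy xy)
qed

lemma sub_star_free:
  fixes a :: "'x option atom" and u :: "'x option atom list"
  shows "nstar_a a = 0 \<Longrightarrow> sub_a w a = sub_a w' a"
    and "nstar_l u = 0 \<Longrightarrow> sub_w w u = sub_w w' u"
  by (induction a and u rule: nstar_a_nstar_l.induct) auto

text \<open>If NF annihilates s in every right context, it annihilates every substitution u|s:
  the context to the left of the star is absorbed by composition, the part above it by
  linearity of \<open>NFP\<close>.\<close>
lemma NF_kills_substitution:
  fixes a :: "'x option atom" and u :: "'x option atom list"
  assumes kills: "\<And>m. linext (\<lambda>w. NFl lam w m) s = 0"
  shows "nstar_a a = 1 \<Longrightarrow> linext (\<lambda>w. NFl lam (sub_a w a) m) s = 0"
    and "nstar_l u = 1 \<Longrightarrow> linext (\<lambda>w. NFl lam (sub_w w u) m) s = 0"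
proof (induction a and u arbitrary: m and m rule: nstar_a_nstar_l.induct)
  case 1
  then show ?case using kills by simp
next
  case (3 u)
  then show ?case by (simp add: NFP_linear)
next
  case (5 a u)
  show ?case
  proof (cases "nstar_a a = 1")
    case True
    then have "nstar_l u = 0" using 5 by simp
    then obtain c where c: "\<And>w. sub_w w u = c" using sub_star_free(2)[OF \<open>nstar_l u = 0\<close>] by blast
    have "linext (\<lambda>w. NFl lam (sub_w w (a # u)) m) s
        = linext (\<lambda>w. linext (NFl lam (sub_a w a)) (NFl lam c m)) s"
      by (simp add: NFl_append c)
    also have "\<dots> = linext (\<lambda>k. linext (\<lambda>w. NFl lam (sub_a w a) k) s) (NFl lam c m)"
      by (rule linext_swap)
    finally show ?thesis using 5(1)[OF True] by simp
  next
    case False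
    then have "nstar_a a = 0" "nstar_l u = 1" using 5 by auto
    then obtain c where c: "\<And>w. sub_a w a = c" using sub_star_free(1)[OF \<open>nstar_a a = 0\<close>] by blast
    have "linext (\<lambda>w. NFl lam (sub_w w (a # u)) m) s
        = linext (NFl lam c) (linext (\<lambda>w. NFl lam (sub_w w u) m) s)"
      by (simp add: NFl_append c linext_comp)
    then show ?thesis using 5(2) \<open>nstar_l u = 1\<close> by simp
  qed
qed simp_all

lemma NF_kills_Idl:
  assumes "q \<in> Idl (RBS lam)"
  shows "NF lam q = 0"
proof -
  have "q \<in> poly_module.span (Gen (RBS lam))" using assms by (simp add: Idl_span)
  then show ?thesis unfolding NF_def
  proof (induction rule: poly_module.span_induct_alt)
    case (step c g q)
    then obtain u s where g: "g = lin (\<lambda>w. sub_w w u) s" "u \<in> StarWords" "s \<in> RBS lam"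
      by blast
    obtain x y where s: "s = RB lam x y" using g(3) unfolding RBS_def by blast
    have "\<And>m. linext (\<lambda>w. NFl lam w m) s = 0" using s NF_kills_RB by simp
    moreover have "nstar_l u = 1" using g(2) by (simp add: StarWords_def)
    ultimately have "linext (\<lambda>w. NFl lam (sub_w w u) []) s = 0"
      by (rule NF_kills_substitution(2))
    moreover have "linext (\<lambda>w. NFl lam w []) g = linext (\<lambda>w. NFl lam (sub_w w u) []) s"
      by (simp add: g lin_linext linext_comp)
    ultimately show ?case using step by (simp add: linext_add linext_scal)
  qed simp
qed

fun isPw :: "'x atom \<Rightarrow> bool" where
  "isPw (Pw _) = True"
| "isPw (Let _) = False"

fun startsP :: "'x atom list \<Rightarrow> bool" where
  "startsP (a # _) = isPw a"
| "startsP [] = False"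

lemma startsP_E: "startsP w \<Longrightarrow> (\<And>z r. w = Pw z # r \<Longrightarrow> thesis) \<Longrightarrow> thesis"
  by (metis isPw.elims(2) startsP.elims(2))

lemma startsP_append: "u \<noteq> [] \<Longrightarrow> startsP (u @ v) = startsP u"
  by (cases u) auto

fun rb_atom :: "'x atom \<Rightarrow> bool" and rb_word :: "'x atom list \<Rightarrow> bool" where
  "rb_atom (Let x) = True"
| "rb_atom (Pw u) = rb_word u"
| "rb_word [] = True"
| "rb_word (a # u) = (rb_atom a \<and> rb_word u \<and> \<not> (isPw a \<and> startsP u))"

definition RBWords :: "'x atom list set" where
  "RBWords = {w. wfw w \<and> rb_word w}"

lemma rb_word_append: "rb_word (u @ v) \<Longrightarrow> rb_word u \<and> rb_word v"
proof (induction u)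
  case (Cons a u)
  then show ?case by (cases "u = []") (auto simp: startsP_append)
qed simp

lemma rb_word_map_Let [simp]: "wfl (map Let xs)" "rb_word (map Let xs)"
  by (induction xs) auto

definition keeps_rb :: "('x atom list \<Rightarrow> ('x, 'k::comm_ring_1) opoly) \<Rightarrow> bool" where
  "keeps_rb F \<longleftrightarrow> (\<forall>m. wfl m \<longrightarrow>
     (\<forall>k\<in>Poly_Mapping.keys (F m). k \<noteq> [] \<and> wfl k \<and> (rb_word m \<longrightarrow> rb_word k)))"

lemma NFP_no_startsP: "\<not> startsP m \<Longrightarrow> NFP lam F m = rcat m (Pop (F []))"
  by (cases "(lam, F, m)" rule: NFP.cases) auto

lemma NFP_keeps_rb:
  assumes F: "keeps_rb F"
  shows "wfl m \<Longrightarrow> k \<in> Poly_Mapping.keys (NFP lam F m)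
     \<Longrightarrow> k \<noteq> [] \<and> wfl k \<and> (rb_word m \<longrightarrow> rb_word k)"
proof (induction m arbitrary: k rule: measure_induct_rule[where f = "size_list size"])
  case (less m)
  have F': "\<And>m z. wfl m \<Longrightarrow> z \<in> Poly_Mapping.keys (F m) \<Longrightarrow> z \<noteq> [] \<and> wfl z \<and> (rb_word m \<longrightarrow> rb_word z)"
    using F unfolding keeps_rb_def by blast
  show ?case
  proof (cases "startsP m")
    case False
    then obtain z where "k = Pw z # m" "z \<in> Poly_Mapping.keys (F [])"
      using less.prems(2) keys_rcat_Pop[of m "F []"] by (auto simp: NFP_no_startsP)
    then show ?thesis using F'[of "[]" z] less.prems(1) False by auto
  next
    case True
    then obtain y m' where m: "m = Pw y # m'" by (rule startsP_E)
    let ?A = "NFP lam F y + F [Pw y] + scal lam (F y)"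
    obtain z where k: "k = Pw z # m'" and z: "z \<in> Poly_Mapping.keys ?A"
      using less.prems(2) keys_rcat_Pop[of m' ?A] by (auto simp: m)
    have y: "y \<noteq> []" "wfl y" "wfl [Pw y]" "wfl m'" using less.prems(1) m by auto
    have "z \<in> Poly_Mapping.keys (NFP lam F y) \<or> z \<in> Poly_Mapping.keys (F [Pw y])
        \<or> z \<in> Poly_Mapping.keys (F y)"
      using z keys_add[of "NFP lam F y + F [Pw y]"] keys_add[of "NFP lam F y"] keys_scal[of lam]
      by blast
    then have "z \<noteq> [] \<and> wfl z \<and> (rb_word y \<longrightarrow> rb_word z)"
      using less.IH[of y z] F'[of "[Pw y]" z] F'[of y z] y m by auto
    then show ?thesis using k y m by auto
  qed
qed

text \<open>Hence all normalisers produced by \<open>NFa\<close> and \<open>NFl\<close> keep the invariant; for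
  m = [] this says that NF only produces normal words.\<close>
lemma NF_keeps_rb:
  fixes a :: "'x atom" and u :: "'x atom list"
  shows "wfa a \<Longrightarrow> keeps_rb (NFa lam a)"
    and "wfl u \<Longrightarrow> wfl m \<Longrightarrow> k \<in> Poly_Mapping.keys (NFl lam u m)
           \<Longrightarrow> (u \<noteq> [] \<longrightarrow> k \<noteq> []) \<and> wfl k \<and> (rb_word m \<longrightarrow> rb_word k)"
proof (induction a and u arbitrary: and m k rule: wfa_wfl.induct)
  case (1 x)
  then show ?case by (simp add: keeps_rb_def)
next
  case (2 v)
  then have "v \<noteq> []" "wfl v" by auto
  then have "keeps_rb (NFl lam v)" unfolding keeps_rb_def using 2(1) by blast
  note NFP = NFP_keeps_rb[OF this]
  show ?case unfolding NFa.simps keeps_rb_def using NFP by blast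
next
  case 3
  then show ?case by simp
next
  case (4 a u)
  then obtain k' where k': "k' \<in> Poly_Mapping.keys (NFl lam u m)"
      "k \<in> Poly_Mapping.keys (NFa lam a k')"
    using keys_linext[of "NFa lam a" "NFl lam u m"] by auto
  have "wfl k' \<and> (rb_word m \<longrightarrow> rb_word k')" using 4 k'(1) by simp
  moreover have "keeps_rb (NFa lam a)" using 4 by simp
  ultimately show ?case using k'(2) unfolding keeps_rb_def by blast
qed

lemma NF_fixes_rb:
  fixes a :: "'x atom" and u :: "'x atom list"
  shows "rb_word (a # k) \<Longrightarrow> NFa lam a k = Poly_Mapping.single (a # k) 1"
    and "rb_word (u @ m) \<Longrightarrow> NFl lam u m = Poly_Mapping.single (u @ m) 1"
proof (induction a and u arbitrary: k and m rule: wfa_wfl.induct)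
  case (2 v)
  then have v: "NFl lam v [] = Poly_Mapping.single v 1" by simp
  show ?case
  proof (cases k)
    case (Cons b k')
    then show ?thesis using 2(2) v by (cases b) (simp_all add: linext_simps)
  qed (simp add: v linext_simps)
qed simp_all

lemma NFP_congruent:
  assumes v: "v \<in> Words"
    and IH: "\<And>m. wfl m \<Longrightarrow> Poly_Mapping.single (v @ m) 1 - NFl lam v m \<in> Idl (RBS lam)"
  shows "wfl m \<Longrightarrow> Poly_Mapping.single (Pw v # m) 1 - NFP lam (NFl lam v) m \<in> Idl (RBS lam)"
proof (induction m rule: measure_induct_rule[where f = "size_list size"])
  case (less m)
  show ?case
  proof (cases "startsP m")
    case False
    then show ?thesis
      using rcat_idl[OF less.prems Pop_idl[OF IH[of "[]"]]] by (simp add: NFP_no_startsP linext_simps)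
  next
    case True
    then obtain y m' where m: "m = Pw y # m'" by (rule startsP_E)
    have y: "y \<in> Words" "wfl y" "wfl m'" "wfl [Pw y]"
      using less.prems m by (auto simp: Words_def wfw_def)
    have "Poly_Mapping.single (Pw v # m) 1 - NFP lam (NFl lam v) m
        = rcat m' (RB lam v y) + rcat m' (Pop ((Poly_Mapping.single (Pw v # y) 1 - NFP lam (NFl lam v) y)
            + (Poly_Mapping.single (v @ [Pw y]) 1 - NFl lam v [Pw y])
            + scal lam (Poly_Mapping.single (v @ y) 1 - NFl lam v y)))"
      by (simp add: m RB_def Pword_def linext_simps algebra_simps)
    also have "\<dots> \<in> Idl (RBS lam)"
      using less.IH[of y] m y(2) IH[OF y(4)] IH[OF y(2)]
      by (intro idl_add rcat_idl RB_idl Pop_idl idl_scal v y) auto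
    finally show ?thesis .
  qed
qed

lemma NF_congruent:
  fixes a :: "'x atom" and u :: "'x atom list"
  shows "wfa a \<Longrightarrow> wfl m \<Longrightarrow> Poly_Mapping.single (a # m) 1 - NFa lam a m \<in> Idl (RBS lam)"
    and "wfl u \<Longrightarrow> wfl m \<Longrightarrow> Poly_Mapping.single (u @ m) 1 - NFl lam u m \<in> Idl (RBS lam)"
proof (induction a and u arbitrary: m and m rule: wfa_wfl.induct)
  case (2 v)
  then show ?case using NFP_congruent[of v lam m] by (simp add: Words_def wfw_def)
next
  case (4 a u)
  define d where "d = Poly_Mapping.single (u @ m) 1 - NFl lam u m"
  have wf: "wfa a" "wfl u" "wfl m" "wfl (u @ m)" using 4 by (auto simp: wfl_append)
  have d: "d \<in> Idl (RBS lam)" using 4 wf by (simp add: d_def)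
  have "\<forall>k\<in>Poly_Mapping.keys d. wfl k"
  proof
    fix k assume "k \<in> Poly_Mapping.keys d"
    then have "k = u @ m \<or> k \<in> Poly_Mapping.keys (NFl lam u m)"
      using keys_diff[of "Poly_Mapping.single (u @ m) 1" "NFl lam u m"] by (auto simp: d_def)
    then show "wfl k" using NF_keeps_rb(2)[OF wf(2,3)] wf(4) by blast
  qed
  then have inner: "linext (\<lambda>k. Poly_Mapping.single (a # k) 1 - NFa lam a k) d \<in> Idl (RBS lam)"
    using 4(1)[OF wf(1)] by (intro idl_linext) blast
  have left: "lcat [a] d \<in> Idl (RBS lam)" using d wf by (intro lcat_idl) auto
  have head: "Poly_Mapping.single (a # u @ m) 1 - NFa lam a (u @ m) \<in> Idl (RBS lam)"
    using 4(1)[OF wf(1,4)] .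
  have split: "Poly_Mapping.single ((a # u) @ m) 1 - NFl lam (a # u) m
      = (Poly_Mapping.single (a # u @ m) 1 - NFa lam a (u @ m)) + lcat [a] d
        - linext (\<lambda>k. Poly_Mapping.single (a # k) 1 - NFa lam a k) d"
    by (simp add: d_def lcat_def linext_diff linext_fun_diff algebra_simps)
  show ?case unfolding split by (rule idl_diff[OF idl_add[OF head left] inner])
qed (simp_all add: idl_zero)

lemma NF_keys:
  assumes "Poly_Mapping.keys p \<subseteq> Words"
  shows "Poly_Mapping.keys (NF lam p) \<subseteq> RBWords"
proof
  fix k assume "k \<in> Poly_Mapping.keys (NF lam p)"
  then obtain w where w: "w \<in> Poly_Mapping.keys p" "k \<in> Poly_Mapping.keys (NFl lam w [])"
    using keys_linext[of "\<lambda>w. NFl lam w []" p] unfolding NF_def by blast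
  then have "w \<noteq> []" "wfl w" using assms by (auto simp: Words_def wfw_def)
  then show "k \<in> RBWords" using NF_keeps_rb(2)[of w "[]" k lam] w(2) by (simp add: RBWords_def wfw_def)
qed

lemma NF_congruent_poly:
  assumes "Poly_Mapping.keys p \<subseteq> Words"
  shows "p - NF lam p \<in> Idl (RBS lam)"
proof -
  have "p - NF lam p = linext (\<lambda>w. Poly_Mapping.single w 1 - NFl lam w []) p"
    by (simp add: NF_def linext_fun_diff)
  also have "\<dots> \<in> Idl (RBS lam)"
    using assms NF_congruent(2)[of _ "[]" lam] by (intro idl_linext) (auto simp: Words_def wfw_def)
  finally show ?thesis .
qed

lemma NF_fixes:
  assumes "Poly_Mapping.keys q \<subseteq> RBWords"
  shows "NF lam q = q"
proof -
  have "NF lam q = linext (\<lambda>w. Poly_Mapping.single w 1) q"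
    unfolding NF_def using assms NF_fixes_rb(2)[of _ "[]" lam]
    by (intro linext_cong) (auto simp: RBWords_def)
  then show ?thesis by simp
qed

section \<open>Rota-Baxter words are the normal words\<close>

fun no_PP :: "'x atom list \<Rightarrow> bool" where
  "no_PP [] = True"
| "no_PP (a # r) = (\<not> (isPw a \<and> startsP r) \<and> no_PP r)"

definition rb_shape :: "'x atom list set \<Rightarrow> 'x atom list \<Rightarrow> bool" where
  "rb_shape Z w \<longleftrightarrow> no_PP w \<and> (\<forall>z. Pw z \<in> set w \<longrightarrow> z \<in> Z)"

lemma no_PP_append:
  "no_PP (u @ v) = (no_PP u \<and> no_PP v \<and> \<not> (u \<noteq> [] \<and> isPw (last u) \<and> startsP v))"
proof (induction u)
  case (Cons a u)
  then show ?case by (cases u) auto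
qed simp

lemma no_PP_map_Let [simp]: "no_PP (map Let xs)"
  by (induction xs) auto

lemma startsP_map_Let [simp]: "\<not> startsP (map Let xs)"
  by (cases xs) auto

lemma rb_shape_map_Let [simp]: "rb_shape Z (map Let xs)"
  by (auto simp: rb_shape_def)

lemma rb_shape_Cons:
  "rb_shape Z (a # r) = (rb_shape Z r \<and> \<not> (isPw a \<and> startsP r) \<and> (\<forall>z. a = Pw z \<longrightarrow> z \<in> Z))"
  by (auto simp: rb_shape_def)

lemma rb_shape_append: "rb_shape Z (u @ v) \<Longrightarrow> rb_shape Z u \<and> rb_shape Z v"
  by (auto simp: rb_shape_def no_PP_append)

lemma rb_shape_mono: "rb_shape Z w \<Longrightarrow> Z \<subseteq> Z' \<Longrightarrow> rb_shape Z' w"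
  by (auto simp: rb_shape_def)

lemma rb_shape_RBWords: "rb_shape RBWords w \<longleftrightarrow> wfl w \<and> rb_word w"
proof (induction w)
  case (Cons a r)
  then show ?case by (cases a) (auto simp: rb_shape_Cons RBWords_def wfw_def)
qed (simp add: rb_shape_def)

lemma spow_0: "[] \<in> spow A 0"
  unfolding spow_def by auto

lemma spow_Cons:
  assumes "b \<in> A" "a \<in> spow A r"
  shows "b @ a \<in> spow A (Suc r)"
proof -
  obtain ws where "a = concat ws" "length ws = r" "set ws \<subseteq> A"
    using assms(2) by (auto simp: spow_def)
  then show ?thesis unfolding spow_def using assms(1) by (intro CollectI exI[of _ "b # ws"]) auto
qed

lemma spow_1: "b \<in> A \<Longrightarrow> b \<in> spow A (Suc 0)"
  using spow_Cons[OF _ spow_0] by fastforce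

text \<open>Lam(S(X), Z) splits into the words starting with a letter and those starting with
  a P-atom; each part is closed under prepending one of its blocks.\<close>
definition LamY :: "'x atom list set \<Rightarrow> 'x atom list set" where
  "LamY Z = (\<Union>r\<in>{1..}. spow (YPZ SX Z) r) \<union> (\<Union>r. {a @ y | a y. a \<in> spow (YPZ SX Z) r \<and> y \<in> SX})"

definition LamP :: "'x atom list set \<Rightarrow> 'x atom list set" where
  "LamP Z = (\<Union>r\<in>{1..}. spow (PZY SX Z) r) \<union> (\<Union>r. {a @ Pword z | a z. a \<in> spow (PZY SX Z) r \<and> z \<in> Z})"

lemma Lam_LamY_LamP: "Lam SX Z = LamY Z \<union> LamP Z"
  unfolding Lam_def LamY_def LamP_def by blast

lemma LamY_intros:
  "y \<in> SX \<Longrightarrow> y \<in> LamY Z"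
  "b \<in> YPZ SX Z \<Longrightarrow> b \<in> LamY Z"
  "b \<in> YPZ SX Z \<Longrightarrow> w \<in> LamY Z \<Longrightarrow> b @ w \<in> LamY Z"
proof -
  show "y \<in> SX \<Longrightarrow> y \<in> LamY Z"
    unfolding LamY_def using spow_0
    by (intro UnI2 UN_I[of 0] CollectI exI[of _ "[]"] exI[of _ y]) auto
  show "b \<in> YPZ SX Z \<Longrightarrow> b \<in> LamY Z"
    unfolding LamY_def using spow_1 by (intro UnI1 UN_I[of "Suc 0"]) auto
  assume b: "b \<in> YPZ SX Z" and w: "w \<in> LamY Z"
  then consider (blocks) r where "w \<in> spow (YPZ SX Z) r"
    | (tail) r a y where "w = a @ y" "a \<in> spow (YPZ SX Z) r" "y \<in> SX"
    unfolding LamY_def by blast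
  then show "b @ w \<in> LamY Z"
  proof cases
    case blocks
    have "Suc r \<in> {1..}" by simp
    with spow_Cons[OF b blocks] show ?thesis unfolding LamY_def by blast
  next
    case tail
    have "b @ w = (b @ a) @ y" by (simp add: tail(1))
    with spow_Cons[OF b tail(2)] tail(3) show ?thesis unfolding LamY_def by blast
  qed
qed

lemma LamP_intros:
  "z \<in> Z \<Longrightarrow> Pword z \<in> LamP Z"
  "b \<in> PZY SX Z \<Longrightarrow> b \<in> LamP Z"
  "b \<in> PZY SX Z \<Longrightarrow> w \<in> LamP Z \<Longrightarrow> b @ w \<in> LamP Z"
proof -
  show "z \<in> Z \<Longrightarrow> Pword z \<in> LamP Z"
    unfolding LamP_def using spow_0
    by (intro UnI2 UN_I[of 0] CollectI exI[of _ "[]"] exI[of _ z]) auto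
  show "b \<in> PZY SX Z \<Longrightarrow> b \<in> LamP Z"
    unfolding LamP_def using spow_1 by (intro UnI1 UN_I[of "Suc 0"]) auto
  assume b: "b \<in> PZY SX Z" and w: "w \<in> LamP Z"
  then consider (blocks) r where "w \<in> spow (PZY SX Z) r"
    | (tail) r a z where "w = a @ Pword z" "a \<in> spow (PZY SX Z) r" "z \<in> Z"
    unfolding LamP_def by blast
  then show "b @ w \<in> LamP Z"
  proof cases
    case blocks
    have "Suc r \<in> {1..}" by simp
    with spow_Cons[OF b blocks] show ?thesis unfolding LamP_def by blast
  next
    case tail
    have "b @ w = (b @ a) @ Pword z" by (simp add: tail(1))
    with spow_Cons[OF b tail(2)] tail(3) show ?thesis unfolding LamP_def by blast
  qed
qed

lemma YPZ_concat_shape: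
  assumes "set ws \<subseteq> YPZ SX Z"
  shows "rb_shape Z (concat ws) \<and> \<not> startsP (concat ws)
         \<and> (ws \<noteq> [] \<longrightarrow> concat ws \<noteq> [] \<and> isPw (last (concat ws)))"
  using assms
proof (induction ws)
  case (Cons b ws)
  then obtain xs z where b: "b = map Let xs @ [Pw z]" "xs \<noteq> []" "z \<in> Z"
    by (auto simp: YPZ_def SX_def Pword_def)
  have IH: "rb_shape Z (concat ws)" "\<not> startsP (concat ws)"
    "ws \<noteq> [] \<longrightarrow> concat ws \<noteq> [] \<and> isPw (last (concat ws))"
    using Cons by auto
  have "no_PP (b @ concat ws)" using IH b by (simp add: no_PP_append rb_shape_def last_map)
  moreover have "\<not> startsP (b @ concat ws)" using b by (cases xs) auto
  moreover have "isPw (last (b @ concat ws))" using IH b by (cases "ws = []") auto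
  ultimately show ?case using IH b by (auto simp: rb_shape_def)
qed (simp add: rb_shape_def)

lemma PZY_concat_shape:
  assumes "set ws \<subseteq> PZY SX Z"
  shows "rb_shape Z (concat ws) \<and> (ws \<noteq> [] \<longrightarrow> concat ws \<noteq> [] \<and> \<not> isPw (last (concat ws)))"
  using assms
proof (induction ws)
  case (Cons b ws)
  then obtain xs z where b: "b = Pw z # map Let xs" "xs \<noteq> []" "z \<in> Z"
    by (auto simp: PZY_def SX_def Pword_def)
  have IH: "rb_shape Z (concat ws)" "ws \<noteq> [] \<longrightarrow> concat ws \<noteq> [] \<and> \<not> isPw (last (concat ws))"
    using Cons by auto
  have last_b: "\<not> isPw (last b)" using b by (cases xs rule: rev_cases) auto
  have "no_PP (b @ concat ws)" using IH b last_b by (simp add: no_PP_append rb_shape_def startsP_append)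
  moreover have "\<not> isPw (last (b @ concat ws))" using IH last_b by (cases "ws = []") auto
  ultimately show ?case using IH b by (auto simp: rb_shape_def)
qed (simp add: rb_shape_def)

lemma Lam_shape: "w \<in> Lam SX Z \<Longrightarrow> w \<noteq> [] \<and> rb_shape Z w"
  unfolding Lam_def
proof (elim UnE)
  assume "w \<in> (\<Union>r\<in>{1..}. spow (YPZ SX Z) r)"
  then obtain ws where w: "w = concat ws" "length ws \<ge> 1" "set ws \<subseteq> YPZ SX Z"
    by (auto simp: spow_def)
  then have "ws \<noteq> []" by auto
  then show ?thesis using YPZ_concat_shape[OF w(3)] w(1) by auto
next
  assume "w \<in> (\<Union>r. {a @ y | a y. a \<in> spow (YPZ SX Z) r \<and> y \<in> SX})"
  then obtain ws xs where w: "w = concat ws @ map Let xs" "xs \<noteq> []" "set ws \<subseteq> YPZ SX Z"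
    by (auto simp: spow_def SX_def)
  then show ?thesis using YPZ_concat_shape[OF w(3)] by (auto simp: rb_shape_def no_PP_append)
next
  assume "w \<in> (\<Union>r\<in>{1..}. spow (PZY SX Z) r)"
  then obtain ws where w: "w = concat ws" "length ws \<ge> 1" "set ws \<subseteq> PZY SX Z"
    by (auto simp: spow_def)
  then have "ws \<noteq> []" by auto
  then show ?thesis using PZY_concat_shape[OF w(3)] w(1) by auto
next
  assume "w \<in> (\<Union>r. {a @ Pword z | a z. a \<in> spow (PZY SX Z) r \<and> z \<in> Z})"
  then obtain ws z where w: "w = concat ws @ [Pw z]" "z \<in> Z" "set ws \<subseteq> PZY SX Z"
    by (auto simp: spow_def Pword_def)
  then show ?thesis using PZY_concat_shape[OF w(3)] by (auto simp: rb_shape_def no_PP_append)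
qed

lemma letter_split:
  "\<not> startsP w \<Longrightarrow> w \<noteq> [] \<Longrightarrow>
     \<exists>xs rest. w = map Let xs @ rest \<and> xs \<noteq> [] \<and> (rest = [] \<or> startsP rest)"
proof (induction w)
  case (Cons a r)
  then obtain x where a: "a = Let x" by (cases a) auto
  show ?case
  proof (cases "r = [] \<or> startsP r")
    case True
    then show ?thesis using a by (intro exI[of _ "[x]"] exI[of _ r]) auto
  next
    case False
    then obtain xs rest where "r = map Let xs @ rest" "xs \<noteq> []" "rest = [] \<or> startsP rest"
      using Cons by auto
    then show ?thesis using a by (intro exI[of _ "x # xs"] exI[of _ rest]) auto
  qed
qed simp

lemma shape_LamY: "rb_shape Z w \<Longrightarrow> w \<noteq> [] \<Longrightarrow> \<not> startsP w \<Longrightarrow> w \<in> LamY Z"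
proof (induction "length w" arbitrary: w rule: less_induct)
  case less
  obtain xs rest where w: "w = map Let xs @ rest" "xs \<noteq> []" "rest = [] \<or> startsP rest"
    using letter_split less.prems by blast
  have xs: "map Let xs \<in> SX" using w(2) by (auto simp: SX_def)
  show ?case
  proof (cases "rest = []")
    case True
    then show ?thesis using w(1) LamY_intros(1)[OF xs] by simp
  next
    case False
    then obtain z rest' where rest: "rest = Pw z # rest'" using w(3) by (blast elim: startsP_E)
    have "rb_shape Z rest" using rb_shape_append less.prems(1) w(1) by blast
    then have z: "z \<in> Z" "\<not> startsP rest'" "rb_shape Z rest'" by (auto simp: rest rb_shape_Cons)
    have b: "map Let xs @ [Pw z] \<in> YPZ SX Z" using xs z by (auto simp: YPZ_def Pword_def)
    have w': "w = (map Let xs @ [Pw z]) @ rest'" using w rest by simp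
    show ?thesis
    proof (cases "rest' = []")
      case True
      then show ?thesis using LamY_intros(2)[OF b] w' by simp
    next
      case False
      then have "rest' \<in> LamY Z" using less.hyps[of rest'] z w' by simp
      then show ?thesis using LamY_intros(3)[OF b] w' by simp
    qed
  qed
qed

lemma shape_LamP: "rb_shape Z w \<Longrightarrow> startsP w \<Longrightarrow> w \<in> LamP Z"
proof (induction "length w" arbitrary: w rule: less_induct)
  case less
  obtain z rest where w: "w = Pw z # rest" using less.prems(2) by (rule startsP_E)
  have z: "z \<in> Z" "\<not> startsP rest" "rb_shape Z rest" using less.prems(1) by (auto simp: w rb_shape_Cons)
  show ?case
  proof (cases "rest = []")
    case True
    then show ?thesis using LamP_intros(1)[OF z(1)] w by (simp add: Pword_def)
  next
    case False
    obtain xs rest' where r: "rest = map Let xs @ rest'" "xs \<noteq> []" "rest' = [] \<or> startsP rest'"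
      using letter_split[OF z(2) False] by blast
    have b: "Pw z # map Let xs \<in> PZY SX Z" using r z by (auto simp: PZY_def Pword_def SX_def)
    have w': "w = (Pw z # map Let xs) @ rest'" using w r by simp
    show ?thesis
    proof (cases "rest' = []")
      case True
      then show ?thesis using LamP_intros(2)[OF b] w' by simp
    next
      case False
      have "rb_shape Z rest'" using rb_shape_append z(3) r(1) by blast
      then have "rest' \<in> LamP Z" using less.hyps[of rest'] False r(3) w' by simp
      then show ?thesis using LamP_intros(3)[OF b] w' by simp
    qed
  qed
qed

lemma Lam_char: "Lam SX Z = {w. w \<noteq> [] \<and> rb_shape Z w}"
  using Lam_shape shape_LamY shape_LamP unfolding Lam_LamY_LamP by blast

text \<open>By the characterisation of Lam, Phi_(n+1) consists of the nonempty words of the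
  right shape with P-arguments in Phi_n; normality then follows by induction on n.\<close>
lemma PhiN_Suc_char: "PhiN (Suc n) = {w. w \<noteq> [] \<and> rb_shape (PhiN n) w}"
  by (simp add: Lam_char)

lemma PhiN_RBWords: "PhiN n \<subseteq> (RBWords :: 'x atom list set)"
proof (induction n)
  case 0
  then show ?case by (auto simp: SX_def RBWords_def wfw_def)
next
  case (Suc n)
  show ?case
  proof
    fix w :: "'x atom list" assume "w \<in> PhiN (Suc n)"
    then have "w \<noteq> []" "rb_shape (PhiN n) w" unfolding PhiN_Suc_char by auto
    moreover have "rb_shape RBWords w" using calculation(2) Suc.IH by (rule rb_shape_mono)
    then have "wfl w \<and> rb_word w" by (simp only: rb_shape_RBWords)
    ultimately show "w \<in> RBWords" by (simp add: RBWords_def wfw_def)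
  qed
qed

lemma mono_PhiN: "mono (PhiN :: nat \<Rightarrow> 'x atom list set)"
  unfolding mono_iff_le_Suc
proof
  fix n show "PhiN n \<le> (PhiN (Suc n) :: 'x atom list set)"
  proof (induction n)
    case 0
    show ?case unfolding PhiN_Suc_char by (auto simp: SX_def)
  next
    case (Suc n)
    show ?case
    proof
      fix w :: "'x atom list" assume "w \<in> PhiN (Suc n)"
      then have "w \<noteq> []" "rb_shape (PhiN n) w" unfolding PhiN_Suc_char by auto
      then show "w \<in> PhiN (Suc (Suc n))"
        unfolding PhiN_Suc_char[of "Suc n"] using rb_shape_mono[OF _ Suc.IH] by blast
    qed
  qed
qed

lemma finite_subset_mono_Union:
  fixes F :: "nat \<Rightarrow> 'a set"
  assumes "mono F" "finite A" "A \<subseteq> (\<Union>n. F n)"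
  shows "\<exists>N. A \<subseteq> F N"
  using assms(2,3)
proof (induction A rule: finite_induct)
  case (insert x A)
  then obtain n N where "x \<in> F n" "A \<subseteq> F N" by blast
  then have "insert x A \<subseteq> F (max n N)"
    using monoD[OF assms(1), of n "max n N"] monoD[OF assms(1), of N "max n N"] by auto
  then show ?case by blast
qed simp

lemma size_Pw_arg: "Pw z \<in> set w \<Longrightarrow> size_list size z < size_list size w"
  by (induction w) auto

text \<open>Conversely, a normal word lies in Phi_(N+1) as soon as its finitely many P-arguments
  lie in a common Phi_N, which holds by induction on size.\<close>
lemma RBWords_PhiN: "w \<in> (RBWords :: 'x atom list set) \<Longrightarrow> \<exists>n. w \<in> PhiN n"
proof (induction w rule: measure_induct_rule[where f = "size_list size"])
  case (less w)
  have shape: "rb_shape RBWords w" "w \<noteq> []"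
    using less.prems rb_shape_RBWords by (auto simp: RBWords_def wfw_def)
  let ?A = "Pw -` set w"
  have "z \<in> (\<Union>n. PhiN n)" if z: "z \<in> ?A" for z
  proof -
    have "z \<in> RBWords" using shape(1) z by (auto simp: rb_shape_def)
    then show ?thesis using less.IH[OF size_Pw_arg] z by blast
  qed
  moreover have "finite ?A" by (rule finite_vimageI) (auto simp: inj_def)
  ultimately obtain N where "?A \<subseteq> PhiN N"
    using finite_subset_mono_Union[OF mono_PhiN] by (metis subsetI)
  then have "rb_shape (PhiN N) w" using shape(1) by (auto simp: rb_shape_def)
  then have "w \<in> PhiN (Suc N)" unfolding PhiN_Suc_char using shape(2) by blast
  then show ?case by blast
qed

theorem Phi_RBWords: "Phi = (RBWords :: 'x atom list set)"
proof
  show "Phi \<subseteq> (RBWords :: 'x atom list set)"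
    unfolding Phi_def by (intro UN_least PhiN_RBWords)
  show "(RBWords :: 'x atom list set) \<subseteq> Phi"
    unfolding Phi_def using RBWords_PhiN by fast
qed

section \<open>Leading words of the relations and irreducible words\<close>

lemma lead_eqI:
  assumes "w \<in> Poly_Mapping.keys f"
    and "\<And>v. v \<in> Poly_Mapping.keys f \<Longrightarrow> v \<noteq> w \<Longrightarrow> wlt v w"
    and "\<And>v. v \<in> Poly_Mapping.keys f \<Longrightarrow> v \<noteq> w \<Longrightarrow> \<not> wlt w v"
  shows "lead f = w"
  unfolding lead_def
proof (rule the_equality)
  show "w \<in> Poly_Mapping.keys f \<and> (\<forall>v\<in>Poly_Mapping.keys f. v \<noteq> w \<longrightarrow> wlt v w)"
    using assms(1,2) by blast
next
  fix w' assume w': "w' \<in> Poly_Mapping.keys f \<and> (\<forall>v\<in>Poly_Mapping.keys f. v \<noteq> w' \<longrightarrow> wlt v w')"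
  show "w' = w"
  proof (rule ccontr)
    assume "w' \<noteq> w"
    then have "wlt w w'" using w' assms(1) by auto
    moreover have "\<not> wlt w w'" using assms(3) w' \<open>w' \<noteq> w\<close> by blast
    ultimately show False by contradiction
  qed
qed

lemma args_single [simp]: "args [Pw z] = [z]"
  by (simp add: args_def)

lemma args_double [simp]: "args [Pw x, Pw y] = [x, y]"
  by (simp add: args_def split: prod.split)

text \<open>In order (1) the number of P-atoms is compared first.\<close>
lemma wlt_single_double: "wlt [Pw z] [Pw x, Pw y]"
  by (rule wlt.by_t) simp

lemma not_wlt_double_single: "\<not> wlt [Pw x, Pw y] [Pw z]"
proof
  assume "wlt [Pw x, Pw y] [Pw z]"
  then show False by (cases rule: wlt.cases) auto
qed

lemma keys_RB:
  "Poly_Mapping.keys (RB lam x y)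
     \<subseteq> {[Pw x, Pw y], [Pw (Pw x # y)], [Pw (x @ [Pw y])], [Pw (x @ y)]}"
  by (auto simp: in_keys_iff RB_def Pword_def lookup_minus lookup_single when_def split: if_splits)

lemma lead_RB: "lead (RB lam x y) = [Pw x, Pw y]"
proof (rule lead_eqI)
  have "Poly_Mapping.lookup (RB lam x y) [Pw x, Pw y] = 1"
    by (simp add: RB_def Pword_def lookup_minus lookup_single)
  then show "[Pw x, Pw y] \<in> Poly_Mapping.keys (RB lam x y)" by (simp add: in_keys_iff)
next
  fix v assume "v \<in> Poly_Mapping.keys (RB lam x y)" "v \<noteq> [Pw x, Pw y]"
  then obtain z where "v = [Pw z]" using keys_RB by blast
  then show "wlt v [Pw x, Pw y]" "\<not> wlt [Pw x, Pw y] v"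
    by (simp_all add: wlt_single_double not_wlt_double_single)
qed

lemma substitution_not_rb:
  fixes b :: "'x option atom" and u :: "'x option atom list"
  shows "nstar_a b = 1 \<Longrightarrow> \<not> rb_word (sub_a [Pw x, Pw y] b)"
    and "nstar_l u = 1 \<Longrightarrow> \<not> rb_word (sub_w [Pw x, Pw y] u)"
proof (induction b and u rule: nstar_a_nstar_l.induct)
  case (5 a u)
  then show ?case using rb_word_append by (cases "nstar_a a = 1") auto
qed auto

lemma non_rb_is_substitution:
  fixes a :: "'x atom" and u :: "'x atom list"
  shows "wfa a \<Longrightarrow> \<not> rb_atom a \<Longrightarrow> \<exists>b x y. nstar_a b = 1 \<and> x \<in> Words \<and> y \<in> Words
           \<and> sub_a [Pw x, Pw y] b = [a] \<and> wfa b"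
    and "wfl u \<Longrightarrow> \<not> rb_word u \<Longrightarrow> \<exists>u' x y. nstar_l u' = 1 \<and> x \<in> Words \<and> y \<in> Words
           \<and> sub_w [Pw x, Pw y] u' = u \<and> u' \<noteq> [] \<and> wfl u'"
proof (induction a and u rule: wfa_wfl.induct)
  case (2 v)
  then obtain u' x y where "nstar_l u' = 1" "x \<in> Words" "y \<in> Words"
      "sub_w [Pw x, Pw y] u' = v" "u' \<noteq> []" "wfl u'"
    by auto
  then show ?case by (intro exI[of _ "Pw u'"] exI[of _ x] exI[of _ y]) auto
next
  case (4 a u)
  have wf: "wfa a" "wfl u" using 4 by auto
  consider "\<not> rb_atom a" | "rb_atom a" "\<not> rb_word u" | "rb_atom a" "rb_word u" by blast
  then show ?case
  proof cases
    case 1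
    then obtain b x y where "nstar_a b = 1" "x \<in> Words" "y \<in> Words"
        "sub_a [Pw x, Pw y] b = [a]" "wfa b"
      using 4(1) wf by blast
    then show ?thesis using wf
      by (intro exI[of _ "b # map (map_atom Some) u"] exI[of _ x] exI[of _ y]) (auto simp: embed_props)
  next
    case 2
    then obtain u' x y where "nstar_l u' = 1" "x \<in> Words" "y \<in> Words"
        "sub_w [Pw x, Pw y] u' = u" "u' \<noteq> []" "wfl u'"
      using 4(2) wf by blast
    then show ?thesis using wf
      by (intro exI[of _ "map_atom Some a # u'"] exI[of _ x] exI[of _ y]) (auto simp: embed_props)
  next
    case 3
    then have "isPw a" "startsP u" using 4(4) by auto
    then obtain x y r where a: "a = Pw x" "u = Pw y # r"
      by (metis isPw.elims(2) startsP_E)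
    have "x \<in> Words" "y \<in> Words" "wfl r" using wf a by (auto simp: Words_def wfw_def)
    then show ?thesis using a
      by (intro exI[of _ "Let None # map (map_atom Some) r"] exI[of _ x] exI[of _ y])
         (auto simp: embed_props)
  qed
qed simp_all

lemma Irr_RBS:
  fixes lam :: "'k::comm_ring_1"
  shows "Irr (RBS lam) = (RBWords :: 'x::wellorder atom list set)"
proof
  show "Irr (RBS lam) \<subseteq> (RBWords :: 'x atom list set)"
  proof
    fix w :: "'x atom list" assume w: "w \<in> Irr (RBS lam)"
    then have wf: "w \<in> Words" by (simp add: Irr_def)
    have "rb_word w"
    proof (rule ccontr)
      assume "\<not> rb_word w"
      then obtain u x y where u: "nstar_l u = 1" "x \<in> Words" "y \<in> Words"
          "sub_w [Pw x, Pw y] u = w" "u \<noteq> []" "wfl u"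
        using non_rb_is_substitution(2)[of w] wf by (auto simp: Words_def wfw_def)
      then have "u \<in> StarWords" "RB lam x y \<in> RBS lam" by (auto simp: StarWords_def wfw_def RBS_def)
      then have "w \<noteq> sub_w (lead (RB lam x y)) u" using w by (simp add: Irr_def)
      then show False using u(4) by (simp add: lead_RB)
    qed
    then show "w \<in> RBWords" using wf by (simp add: RBWords_def Words_def)
  qed
next
  show "(RBWords :: 'x atom list set) \<subseteq> Irr (RBS lam)"
  proof
    fix w :: "'x atom list" assume w: "w \<in> RBWords"
    show "w \<in> Irr (RBS lam)" unfolding Irr_def
    proof (intro CollectI conjI ballI)
      show "w \<in> Words" using w by (simp add: RBWords_def Words_def)
      fix u :: "'x option atom list" and s :: "('x, 'k) opoly"
      assume u: "u \<in> StarWords" and s: "s \<in> RBS lam"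
      then obtain x y where "s = RB lam x y" by (auto simp: RBS_def)
      then show "w \<noteq> sub_w (lead s) u"
        using substitution_not_rb(2)[of u x y] u w by (auto simp: lead_RB StarWords_def RBWords_def)
    qed
  qed
qed

theorem theorem4p3:
  fixes lam :: "'k::comm_ring_1"
  shows "Irr (RBS lam :: ('x::wellorder, 'k) opoly set) = Phi
    \<and> (\<forall>p\<in>(KXP :: ('x, 'k) opoly set). \<exists>q. Poly_Mapping.keys q \<subseteq> Phi \<and> p - q \<in> Idl (RBS lam))
    \<and> (\<forall>q :: ('x, 'k) opoly. Poly_Mapping.keys q \<subseteq> Phi \<and> q \<in> Idl (RBS lam) \<longrightarrow> q = 0)"
proof (intro conjI ballI allI impI)
  show "Irr (RBS lam :: ('x, 'k) opoly set) = Phi"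
    by (simp add: Irr_RBS Phi_RBWords)
next
  fix p :: "('x, 'k) opoly" assume "p \<in> KXP"
  then have "Poly_Mapping.keys p \<subseteq> Words" by (simp add: KXP_def)
  then show "\<exists>q. Poly_Mapping.keys q \<subseteq> Phi \<and> p - q \<in> Idl (RBS lam)"
    using NF_keys NF_congruent_poly Phi_RBWords by blast
next
  fix q :: "('x, 'k) opoly" assume "Poly_Mapping.keys q \<subseteq> Phi \<and> q \<in> Idl (RBS lam)"
  then have "NF lam q = q" "NF lam q = 0"
    using NF_fixes NF_kills_Idl Phi_RBWords by blast+
  then show "q = 0" by simp
qed

end
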